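(* Let $p\ge2$. For every $\beta>0$ and $x>0$, almost surely $$\lim_{N\to\infty}AF_N(\beta)=\max_{m\in[0,1]}\Big(F\Big(\beta,\frac{\beta^2pm^{p-1}}{2}\Big)-\frac{\beta^2(p-1)m^p}{2}\Big),$$ $$\lim_{N\to\infty}L_N(x)=\max_{m\in[0,1]}\Big(F\Big(\beta,\frac{\beta xpm^{p-1}}{2}\Big)-\frac{\beta x(p-1)m^p}{2}\Big).$$
   Context: $\Sigma_N=\{-1,1\}^N$, $(g_{i_1,\dots,i_p})$ i.i.d. standard Gaussians, $H_N(\sigma)=N^{-(p-1)/2}\sum_{1\le i_1,\dots,i_p\le N}g_{i_1,\dots,i_p}\sigma_{i_1}\cdots\sigma_{i_p}$. Let $h=(h_i)_{i\le N}$ be i.i.d. uniform signs in $\{\pm1\}$ independent of $g$, and $m_N(\sigma)=\frac1N\sum_{i=1}^Nh_i\sigma_i$. Define $F_N(\beta,y)=\frac1N\log\sum_{\sigma}2^{-N}\exp\big(\tfrac\beta{\sqrt2}H_N(\sigma)+yNm_N(\sigma)\big)$; it is known that $F_N(\beta,y)$ converges a.s. to a nonrandom limit $F(\beta,y)$ (given by the Parisi formula), which is differentiable in $y$ with $\partial_yF(\beta,y)>0$ for $y>0$. Further, $AF_N(\beta)=\frac1N\log\sum_{\sigma}2^{-N}\exp\big(\tfrac\beta{\sqrt2}H_N(\sigma)+\tfrac{\beta^2}{2}Nm_N(\sigma)^p\big)$ and, for $x>0$, $L_N(x)=\frac1N\log\sum_{\sigma}2^{-N}\exp\big(\tfrac\beta{\sqrt2}H_N(\sigma)+\tfrac{\beta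 x}{2}Nm_N(\sigma)^p\big)$. *)

theory Defs
  imports "HOL-Probability.Probability"
begin

text \<open>Index convention: spins and indices are 0-based, i.e. i ranges over {..<N}
  instead of {1..N}; a multi-index (i_1,...,i_p) is a list of length p.\<close>

definition cfg :: "nat \<Rightarrow> (nat \<Rightarrow> real) set" where
  "cfg N = PiE {..<N} (\<lambda>_. {-1, 1})"

definition idx :: "nat \<Rightarrow> nat \<Rightarrow> nat list set" where
  "idx p N = {l. length l = p \<and> set l \<subseteq> {..<N}}"

definition Ham :: "nat \<Rightarrow> nat \<Rightarrow> (nat list \<Rightarrow> real) \<Rightarrow> (nat \<Rightarrow> real) \<Rightarrow> real" where
  "Ham p N g \<sigma> = real N powr (- (real p - 1) / 2) *
     (\<Sum>l\<in>idx p N. g l * (\<Prod>j<p. \<sigma> (l ! j)))"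

definition mag :: "nat \<Rightarrow> (nat \<Rightarrow> real) \<Rightarrow> (nat \<Rightarrow> real) \<Rightarrow> real" where
  "mag N h \<sigma> = (\<Sum>i<N. h i * \<sigma> i) / real N"

definition FN :: "nat \<Rightarrow> nat \<Rightarrow> (nat list \<Rightarrow> real) \<Rightarrow> (nat \<Rightarrow> real) \<Rightarrow> real \<Rightarrow> real \<Rightarrow> real" where
  "FN p N g h \<beta> y = ln (\<Sum>\<sigma>\<in>cfg N. 2 powr (- real N) *
      exp (\<beta> / sqrt 2 * Ham p N g \<sigma> + y * real N * mag N h \<sigma>)) / real N"

definition AFN :: "nat \<Rightarrow> nat \<Rightarrow> (nat list \<Rightarrow> real) \<Rightarrow> (nat \<Rightarrow> real) \<Rightarrow> real \<Rightarrow> real" where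
  "AFN p N g h \<beta> = ln (\<Sum>\<sigma>\<in>cfg N. 2 powr (- real N) *
      exp (\<beta> / sqrt 2 * Ham p N g \<sigma> + \<beta>\<^sup>2 / 2 * real N * mag N h \<sigma> ^ p)) / real N"

definition LN :: "nat \<Rightarrow> nat \<Rightarrow> (nat list \<Rightarrow> real) \<Rightarrow> (nat \<Rightarrow> real) \<Rightarrow> real \<Rightarrow> real \<Rightarrow> real" where
  "LN p N g h \<beta> x = ln (\<Sum>\<sigma>\<in>cfg N. 2 powr (- real N) *
      exp (\<beta> / sqrt 2 * Ham p N g \<sigma> + \<beta> * x / 2 * real N * mag N h \<sigma> ^ p)) / real N"

end

theory Submission
  imports Defs
begin

text \<open>
  Since t \<mapsto> t^p is convex on [0, \<infinity>), the perturbation c N m^p lies above each of its tangents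
  c N (p q^(p-1) m - (p-1) q^p), i.e. above an external field of strength y = c p q^(p-1). This
  gives the lower bound F(y) - c (p-1) q^p for every q, once configurations with m < 0 are shown
  to be negligible, which F(y) > F(0) guarantees. Conversely, on each cell [k/K, (k+1)/K] of a
  grid of [0, 1] the power m^p is bounded by an affine function whose slope is the tangent slope
  at the left end, so the perturbed partition function is at most 2K + 1 tilted ones, at the cost
  of an error c p / K. Negative magnetisations are harmless for odd p and are reflected to
  positive ones by the global spin flip for even p.
\<close>

section \<open>Affine bounds for the perturbation\<close>

lemma power_above_tangent:
  fixes a t :: real
  assumes "0 \<le> a" "0 \<le> t"
  shows "a ^ p + real p * a ^ (p - 1) * (t - a) \<le> t ^ p"
proof (cases "a = 0")
  case True
  then show ?thesis using assms by (cases p) (auto simp: power_0_left)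
next
  case False
  have convex: "convex_on {0..} (\<lambda>x::real. x ^ p)"
    by (cases "even p") (auto intro: convex_on_subset[OF convex_power_even] convex_power_odd)
  have "real p * a ^ (p - 1) * (t - a) \<le> t ^ p - a ^ p"
  proof (rule convex_on_imp_above_tangent[OF convex])
    show "((\<lambda>x. x ^ p) has_real_derivative real p * a ^ (p - 1)) (at a within {0..})"
      by (auto intro!: derivative_eq_intros)
  qed (use assms False in auto)
  then show ?thesis by simp
qed

lemma power_diff_le_on_unit_interval:
  fixes x y :: real
  assumes "0 \<le> y" "y \<le> x" "x \<le> 1"
  shows "x ^ p - y ^ p \<le> real p * (x - y)"
proof -
  have "x ^ p - y ^ p \<le> real p * x ^ (p - 1) * (x - y)"
    using power_above_tangent[of x y p] assms by (simp add: algebra_simps)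
  also have "\<dots> \<le> real p * (x - y)"
    using assms by (intro mult_right_mono mult_left_le power_le_one) auto
  finally show ?thesis .
qed

lemma grid_cell_exists:
  fixes t :: real
  assumes "0 \<le> t" "t \<le> 1" "K \<ge> 1"
  shows "\<exists>k<K. real k / real K \<le> t \<and> t \<le> (real k + 1) / real K"
proof (cases "t < 1")
  case True
  define k where "k = nat \<lfloor>t * real K\<rfloor>"
  have K_pos: "real K > 0" using assms by simp
  have k_eq: "real k = of_int \<lfloor>t * real K\<rfloor>" unfolding k_def using assms by simp
  have lower: "real k \<le> t * real K" and upper: "t * real K < real k + 1"
    using k_eq by linarith+
  have "t * real K < real K" using True K_pos by simp
  then have "k < K" using lower by linarith
  moreover have "real k / real K \<le> t" using lower K_pos by (simp add: divide_le_eq)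
  moreover have "t \<le> (real k + 1) / real K" using upper K_pos by (simp add: le_divide_eq)
  ultimately show ?thesis by blast
next
  case False
  then have "t = 1" using assms by simp
  then show ?thesis using assms by (intro exI[of _ "K - 1"]) (auto simp: of_nat_diff divide_le_eq)
qed

text \<open>
  On the cell [k/K, (k+1)/K] the function c t^p is bounded by the affine function
  grid_offset + grid_field * t, which has the tangent slope of c t^p at k/K and the value
  c ((k+1)/K)^p at t = k/K.
\<close>

definition grid_field :: "real \<Rightarrow> nat \<Rightarrow> nat \<Rightarrow> nat \<Rightarrow> real" where
  "grid_field c p K k = c * real p * (real k / real K) ^ (p - 1)"

definition grid_offset :: "real \<Rightarrow> nat \<Rightarrow> nat \<Rightarrow> nat \<Rightarrow> real" where
  "grid_offset c p K k = c * ((real k + 1) / real K) ^ p - grid_field c p K k * (real k / real K)"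

lemma exp_power_le_grid_sum:
  fixes c n t :: real
  assumes "0 \<le> c" "0 \<le> n" "0 \<le> t" "t \<le> 1" "K \<ge> 1"
  shows "exp (c * n * t ^ p)
    \<le> (\<Sum>k<K. exp (n * grid_offset c p K k) * exp (grid_field c p K k * n * t))"
proof -
  obtain k where k: "k < K" "real k / real K \<le> t" "t \<le> (real k + 1) / real K"
    using grid_cell_exists assms(3-5) by blast
  have "c * n * t ^ p \<le> c * n * ((real k + 1) / real K) ^ p"
    using k assms by (intro mult_left_mono power_mono) auto
  moreover have "0 \<le> n * (grid_field c p K k * (t - real k / real K))"
    using k assms by (simp add: grid_field_def)
  ultimately have "c * n * t ^ p \<le> n * grid_offset c p K k + grid_field c p K k * n * t"
    unfolding grid_offset_def by (simp add: algebra_simps)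
  then have "exp (c * n * t ^ p) \<le> exp (n * grid_offset c p K k) * exp (grid_field c p K k * n * t)"
    by (simp flip: exp_add)
  also have "\<dots> \<le> (\<Sum>k<K. exp (n * grid_offset c p K k) * exp (grid_field c p K k * n * t))"
    by (rule member_le_sum) (use k in auto)
  finally show ?thesis .
qed

lemma exp_power_le_grid_sum_odd:
  fixes c n t :: real
  assumes "odd p" "0 \<le> c" "0 \<le> n" "\<bar>t\<bar> \<le> 1" "K \<ge> 1"
  shows "exp (c * n * t ^ p)
    \<le> (\<Sum>k<K. exp (n * grid_offset c p K k) * exp (grid_field c p K k * n * t)) + 1"
proof (cases "0 \<le> t")
  case True
  then show ?thesis using exp_power_le_grid_sum[of c n t K p] assms by simp
next
  case False
  then have "c * n * t ^ p \<le> 0"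
    using assms by (intro mult_nonneg_nonpos) (auto simp: power_less_zero_eq less_imp_le)
  then have "exp (c * n * t ^ p) \<le> 1" by simp
  moreover have "0 \<le> (\<Sum>k<K. exp (n * grid_offset c p K k) * exp (grid_field c p K k * n * t))"
    by (intro sum_nonneg) simp
  ultimately show ?thesis by linarith
qed

lemma exp_power_le_grid_sum_even:
  fixes c n t :: real
  assumes "even p" "0 \<le> c" "0 \<le> n" "\<bar>t\<bar> \<le> 1" "K \<ge> 1"
  shows "exp (c * n * t ^ p) \<le> (\<Sum>k<K. exp (n * grid_offset c p K k) *
      (exp (grid_field c p K k * n * t) + exp (grid_field c p K k * n * (- t))))"
proof -
  have "exp (c * n * t ^ p) = exp (c * n * \<bar>t\<bar> ^ p)"
    using assms by (simp add: power_even_abs)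
  also have "\<dots> \<le> (\<Sum>k<K. exp (n * grid_offset c p K k) * exp (grid_field c p K k * n * \<bar>t\<bar>))"
    by (rule exp_power_le_grid_sum) (use assms in auto)
  also have "\<dots> \<le> (\<Sum>k<K. exp (n * grid_offset c p K k) *
      (exp (grid_field c p K k * n * t) + exp (grid_field c p K k * n * (- t))))"
    by (intro sum_mono mult_left_mono) (auto simp: abs_real_def add_increasing add_increasing2)
  finally show ?thesis .
qed

lemma exp_linear_tilt_le_exp_power:
  fixes a c n t :: real
  assumes "0 \<le> a" "0 \<le> c" "0 \<le> n"
  shows "exp (- (c * (real p - 1) * a ^ p * n)) * (exp (c * real p * a ^ (p - 1) * n * t) - 1)
    \<le> exp (c * n * t ^ p)"
proof (cases "0 \<le> t")
  case True
  have "real p * a ^ (p - 1) * a = real p * a ^ p" by (cases p) auto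
  then have "- (c * (real p - 1) * a ^ p * n) + c * real p * a ^ (p - 1) * n * t
      = c * n * (a ^ p + real p * a ^ (p - 1) * (t - a))"
    by (simp add: algebra_simps)
  also have "\<dots> \<le> c * n * t ^ p"
    using power_above_tangent[OF assms(1) True] assms by (intro mult_left_mono) auto
  finally have tangent: "- (c * (real p - 1) * a ^ p * n) + c * real p * a ^ (p - 1) * n * t
      \<le> c * n * t ^ p" .
  have "exp (- (c * (real p - 1) * a ^ p * n)) * (exp (c * real p * a ^ (p - 1) * n * t) - 1)
      \<le> exp (- (c * (real p - 1) * a ^ p * n)) * exp (c * real p * a ^ (p - 1) * n * t)"
    by (intro mult_left_mono) auto
  also have "\<dots> \<le> exp (c * n * t ^ p)"
    using tangent by (simp flip: exp_add)
  finally show ?thesis .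
next
  case False
  then have "exp (c * real p * a ^ (p - 1) * n * t) \<le> 1"
    using assms by (simp add: mult_nonneg_nonpos)
  then have "exp (- (c * (real p - 1) * a ^ p * n)) * (exp (c * real p * a ^ (p - 1) * n * t) - 1) \<le> 0"
    by (simp add: mult_nonneg_nonpos)
  then show ?thesis using exp_gt_zero[of "c * n * t ^ p"] by linarith
qed

definition sign_symmetric :: "'a set \<Rightarrow> ('a \<Rightarrow> real) \<Rightarrow> ('a \<Rightarrow> real) \<Rightarrow> bool" where
  "sign_symmetric S w m \<longleftrightarrow>
     (\<exists>\<iota>. \<forall>\<sigma>\<in>S. \<iota> \<sigma> \<in> S \<and> \<iota> (\<iota> \<sigma>) = \<sigma> \<and> w (\<iota> \<sigma>) = w \<sigma> \<and> m (\<iota> \<sigma>) = - m \<sigma>)"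

lemma sign_symmetric_sum:
  assumes "sign_symmetric S w m"
  shows "(\<Sum>\<sigma>\<in>S. w \<sigma> * f (- m \<sigma>)) = (\<Sum>\<sigma>\<in>S. w \<sigma> * f (m \<sigma>))"
proof -
  obtain \<iota> where \<iota>: "\<And>\<sigma>. \<sigma> \<in> S \<Longrightarrow> \<iota> \<sigma> \<in> S \<and> \<iota> (\<iota> \<sigma>) = \<sigma> \<and> w (\<iota> \<sigma>) = w \<sigma> \<and> m (\<iota> \<sigma>) = - m \<sigma>"
    using assms unfolding sign_symmetric_def by blast
  show ?thesis
    by (rule sum.reindex_bij_witness[of S \<iota> \<iota>]) (auto simp: \<iota>)
qed

lemma partition_lower_bound:
  fixes w m :: "'a \<Rightarrow> real" and a c n :: real
  assumes "finite S" "\<And>\<sigma>. \<sigma> \<in> S \<Longrightarrow> 0 \<le> w \<sigma>" "0 \<le> a" "0 \<le> c" "0 \<le> n"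
  shows "exp (- (c * (real p - 1) * a ^ p * n)) *
      ((\<Sum>\<sigma>\<in>S. w \<sigma> * exp (c * real p * a ^ (p - 1) * n * m \<sigma>)) - sum w S)
    \<le> (\<Sum>\<sigma>\<in>S. w \<sigma> * exp (c * n * m \<sigma> ^ p))"
proof -
  have factor: "X * ((\<Sum>\<sigma>\<in>S. w \<sigma> * e \<sigma>) - sum w S) = (\<Sum>\<sigma>\<in>S. w \<sigma> * (X * (e \<sigma> - 1)))"
    for X :: real and e :: "'a \<Rightarrow> real"
    by (simp add: sum_distrib_left sum_subtractf right_diff_distrib ac_simps)
  have "exp (- (c * (real p - 1) * a ^ p * n)) *
      ((\<Sum>\<sigma>\<in>S. w \<sigma> * exp (c * real p * a ^ (p - 1) * n * m \<sigma>)) - sum w S)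
    = (\<Sum>\<sigma>\<in>S. w \<sigma> * (exp (- (c * (real p - 1) * a ^ p * n)) *
        (exp (c * real p * a ^ (p - 1) * n * m \<sigma>) - 1)))"
    by (rule factor)
  also have "\<dots> \<le> (\<Sum>\<sigma>\<in>S. w \<sigma> * exp (c * n * m \<sigma> ^ p))"
    by (intro sum_mono mult_left_mono exp_linear_tilt_le_exp_power) (use assms in auto)
  finally show ?thesis .
qed

lemma partition_upper_bound:
  fixes w m :: "'a \<Rightarrow> real" and c n :: real
  assumes "finite S" "\<And>\<sigma>. \<sigma> \<in> S \<Longrightarrow> 0 \<le> w \<sigma>" "\<And>\<sigma>. \<sigma> \<in> S \<Longrightarrow> \<bar>m \<sigma>\<bar> \<le> 1"
    and "0 \<le> c" "0 \<le> n" "K \<ge> 1" "even p \<Longrightarrow> sign_symmetric S w m"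
  shows "(\<Sum>\<sigma>\<in>S. w \<sigma> * exp (c * n * m \<sigma> ^ p))
    \<le> 2 * (\<Sum>k<K. exp (n * grid_offset c p K k) *
             (\<Sum>\<sigma>\<in>S. w \<sigma> * exp (grid_field c p K k * n * m \<sigma>))) + sum w S"
proof -
  define f where "f k = exp (n * grid_offset c p K k)" for k
  define Z where "Z k = (\<Sum>\<sigma>\<in>S. w \<sigma> * exp (grid_field c p K k * n * m \<sigma>))" for k
  have swap: "(\<Sum>\<sigma>\<in>S. w \<sigma> * (\<Sum>k<K. f k * e k \<sigma>)) = (\<Sum>k<K. f k * (\<Sum>\<sigma>\<in>S. w \<sigma> * e k \<sigma>))"
    for e :: "nat \<Rightarrow> 'a \<Rightarrow> real"
    by (simp add: sum_distrib_left sum.swap[of _ S] mult.left_commute)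
  have Z_nonneg: "0 \<le> (\<Sum>k<K. f k * Z k)" "0 \<le> sum w S"
    using assms(2) unfolding f_def Z_def by (auto intro!: sum_nonneg mult_nonneg_nonneg)
  show ?thesis
  proof (cases "even p")
    case True
    have "(\<Sum>\<sigma>\<in>S. w \<sigma> * exp (c * n * m \<sigma> ^ p)) \<le> (\<Sum>\<sigma>\<in>S. w \<sigma> *
        (\<Sum>k<K. f k * (exp (grid_field c p K k * n * m \<sigma>) + exp (grid_field c p K k * n * (- m \<sigma>)))))"
      unfolding f_def by (intro sum_mono mult_left_mono exp_power_le_grid_sum_even) (use assms True in auto)
    also have "\<dots> = (\<Sum>k<K. f k * (Z k + (\<Sum>\<sigma>\<in>S. w \<sigma> * exp (grid_field c p K k * n * (- m \<sigma>)))))"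
      unfolding swap Z_def by (simp add: distrib_left sum.distrib)
    also have "\<dots> = (\<Sum>k<K. f k * (2 * Z k))"
      using sign_symmetric_sum[OF assms(7)[OF True], of "\<lambda>t. exp (grid_field c p K _ * n * t)"]
      by (simp add: Z_def)
    also have "\<dots> = 2 * (\<Sum>k<K. f k * Z k)"
      by (simp add: sum_distrib_left ac_simps)
    finally show ?thesis using Z_nonneg unfolding f_def Z_def by linarith
  next
    case False
    have "(\<Sum>\<sigma>\<in>S. w \<sigma> * exp (c * n * m \<sigma> ^ p))
        \<le> (\<Sum>\<sigma>\<in>S. w \<sigma> * ((\<Sum>k<K. f k * exp (grid_field c p K k * n * m \<sigma>)) + 1))"
      unfolding f_def by (intro sum_mono mult_left_mono exp_power_le_grid_sum_odd) (use assms False in auto)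
    also have "\<dots> = (\<Sum>k<K. f k * Z k) + sum w S"
      unfolding distrib_left sum.distrib swap Z_def by simp
    finally show ?thesis using Z_nonneg unfolding f_def Z_def by linarith
  qed
qed

section \<open>The limit for abstract weights\<close>

lemma deriv_pos_imp_increasing_open:
  fixes f :: "real \<Rightarrow> real"
  assumes "a < b" "\<And>x. f differentiable (at x)" "\<And>x. a < x \<Longrightarrow> x < b \<Longrightarrow> deriv f x > 0"
  shows "f a < f b"
proof (rule DERIV_pos_imp_increasing_open[OF \<open>a < b\<close>])
  show "\<exists>y. (f has_real_derivative y) (at x) \<and> 0 < y" if "a < x" "x < b" for x
    using assms that DERIV_deriv_iff_real_differentiable by blast
  show "continuous_on {a..b} f"
    using assms(2) by (intro continuous_at_imp_continuous_on) (auto intro: differentiable_imp_continuous_within)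
qed

definition mag_functional :: "(real \<Rightarrow> real) \<Rightarrow> real \<Rightarrow> nat \<Rightarrow> real \<Rightarrow> real" where
  "mag_functional F c p t = F (c * real p * t ^ (p - 1)) - c * (real p - 1) * t ^ p"

lemma isCont_mag_functional:
  assumes "\<And>y. isCont F y"
  shows "isCont (mag_functional F c p) t"
proof -
  have "isCont (\<lambda>t. F (c * real p * t ^ (p - 1))) t"
    by (rule isCont_o2[OF _ assms]) (intro continuous_intros)
  then have "isCont (\<lambda>t. F (c * real p * t ^ (p - 1)) - c * (real p - 1) * t ^ p) t"
    by (intro continuous_intros)
  moreover have "mag_functional F c p = (\<lambda>t. F (c * real p * t ^ (p - 1)) - c * (real p - 1) * t ^ p)"
    by (rule ext) (simp add: mag_functional_def)
  ultimately show ?thesis by simp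
qed

lemma mag_functional_attains_max:
  assumes "\<And>y. isCont F y"
  obtains \<mu> where "\<mu> \<in> {0..1}" "\<And>t. t \<in> {0..1} \<Longrightarrow> mag_functional F c p t \<le> mag_functional F c p \<mu>"
proof -
  have "continuous_on {0..1} (mag_functional F c p)"
    using isCont_mag_functional[OF assms] by (intro continuous_at_imp_continuous_on) auto
  then show ?thesis
    using continuous_attains_sup[of "{0..1::real}" "mag_functional F c p"] that by auto
qed

text \<open>
  Convergence of the free energy with external field is only assumed for the countably many fields
  c p q^(p-1) with rational q, so that in the random setting it holds almost surely for all of them
  simultaneously.
\<close>

locale mag_perturbation =
  fixes S :: "nat \<Rightarrow> 'a set" and w m :: "nat \<Rightarrow> 'a \<Rightarrow> real"
    and F :: "real \<Rightarrow> real" and c :: real and p :: nat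
  assumes p_ge_2: "p \<ge> 2" and c_pos: "c > 0"
    and finite_S: "\<And>N. finite (S N)" and S_nonempty: "\<And>N. S N \<noteq> {}"
    and w_pos: "\<And>N \<sigma>. \<sigma> \<in> S N \<Longrightarrow> 0 < w N \<sigma>"
    and m_bounded: "\<And>N \<sigma>. \<sigma> \<in> S N \<Longrightarrow> \<bar>m N \<sigma>\<bar> \<le> 1"
    and symmetric: "\<And>N. even p \<Longrightarrow> sign_symmetric (S N) (w N) (m N)"
    and free_energy_lim: "\<And>q. q \<in> \<rat> \<Longrightarrow>
      (\<lambda>N. ln (\<Sum>\<sigma>\<in>S N. w N \<sigma> * exp (c * real p * q ^ (p - 1) * real N * m N \<sigma>)) / real N)
        \<longlonglongrightarrow> F (c * real p * q ^ (p - 1))"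
    and F_continuous: "\<And>y. isCont F y"
    and F_gt_F0: "\<And>y. y > 0 \<Longrightarrow> F 0 < F y"
begin

abbreviation G :: "real \<Rightarrow> real" where
  "G \<equiv> mag_functional F c p"

definition Z :: "nat \<Rightarrow> real \<Rightarrow> real" where
  "Z N y = (\<Sum>\<sigma>\<in>S N. w N \<sigma> * exp (y * real N * m N \<sigma>))"

definition free_energy :: "nat \<Rightarrow> real \<Rightarrow> real" where
  "free_energy N y = ln (Z N y) / real N"

definition Z_pert :: "nat \<Rightarrow> real" where
  "Z_pert N = (\<Sum>\<sigma>\<in>S N. w N \<sigma> * exp (c * real N * m N \<sigma> ^ p))"

definition pert_free_energy :: "nat \<Rightarrow> real" where
  "pert_free_energy N = ln (Z_pert N) / real N"

lemma Z_pos: "0 < Z N y"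
  unfolding Z_def by (intro sum_pos finite_S S_nonempty) (simp add: w_pos)

lemma Z_pert_pos: "0 < Z_pert N"
  unfolding Z_pert_def by (intro sum_pos finite_S S_nonempty) (simp add: w_pos)

lemma Z_zero: "Z N 0 = sum (w N) (S N)"
  by (simp add: Z_def)

lemma Z_eq_exp_free_energy: "0 < N \<Longrightarrow> Z N y = exp (real N * free_energy N y)"
  using Z_pos[of N y] by (simp add: free_energy_def)

lemma free_energy_tendsto:
  "q \<in> \<rat> \<Longrightarrow> (\<lambda>N. free_energy N (c * real p * q ^ (p - 1))) \<longlonglongrightarrow> F (c * real p * q ^ (p - 1))"
  unfolding free_energy_def Z_def by (rule free_energy_lim)

lemma free_energy_zero_tendsto: "(\<lambda>N. free_energy N 0) \<longlonglongrightarrow> F 0"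
  using free_energy_tendsto[of 0] p_ge_2 by (simp add: power_0_left)

lemma G_zero: "G 0 = F 0"
  using p_ge_2 by (simp add: mag_functional_def power_0_left)

lemma pert_free_energy_ge:
  assumes "0 < N" "0 \<le> q" "2 * Z N 0 \<le> Z N (c * real p * q ^ (p - 1))"
  shows "free_energy N (c * real p * q ^ (p - 1)) - c * (real p - 1) * q ^ p - ln 2 / real N
    \<le> pert_free_energy N"
proof -
  define y where "y = c * real p * q ^ (p - 1)"
  define k where "k = c * (real p - 1) * q ^ p * real N"
  have "exp (- k + real N * free_energy N y - ln 2) = exp (- k) * (Z N y / 2)"
    unfolding Z_eq_exp_free_energy[OF assms(1)] by (simp add: exp_add exp_diff exp_minus field_simps)
  also have "\<dots> \<le> exp (- k) * (Z N y - Z N 0)"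
    using assms(3) unfolding y_def by (intro mult_left_mono) auto
  also have "\<dots> \<le> Z_pert N"
    unfolding Z_zero unfolding Z_def Z_pert_def y_def k_def
    by (rule partition_lower_bound[of "S N" "w N"])
      (use finite_S w_pos assms c_pos in \<open>auto intro: less_imp_le\<close>)
  finally have "- k + real N * free_energy N y - ln 2 \<le> ln (Z_pert N)"
    using ln_ge_iff[OF Z_pert_pos] by blast
  then have "(- k + real N * free_energy N y - ln 2) / real N \<le> pert_free_energy N"
    unfolding pert_free_energy_def using assms(1) by (intro divide_right_mono) auto
  also have "(- k + real N * free_energy N y - ln 2) / real N
      = free_energy N y - c * (real p - 1) * q ^ p - ln 2 / real N"
    using assms(1) unfolding k_def by (simp add: diff_divide_distrib add_divide_distrib)
  finally show ?thesis unfolding y_def .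
qed

lemma pert_free_energy_le:
  assumes "0 < N" "K \<ge> 1"
    and grid: "\<And>k. k < K \<Longrightarrow> grid_offset c p K k + free_energy N (grid_field c p K k) \<le> B"
    and zero: "free_energy N 0 \<le> B"
  shows "pert_free_energy N \<le> B + ln (2 * real K + 1) / real N"
proof -
  define n where "n = real N"
  have n_pos: "0 < n" unfolding n_def using assms(1) by simp
  have term_le: "exp (n * grid_offset c p K k) * Z N (grid_field c p K k) \<le> exp (n * B)"
    if "k < K" for k
  proof -
    have "exp (n * grid_offset c p K k) * Z N (grid_field c p K k)
        = exp (n * grid_offset c p K k) * exp (n * free_energy N (grid_field c p K k))"
      unfolding n_def by (simp only: Z_eq_exp_free_energy[OF assms(1)])
    also have "\<dots> = exp (n * (grid_offset c p K k + free_energy N (grid_field c p K k)))"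
      by (simp only: distrib_left exp_add)
    also have "\<dots> \<le> exp (n * B)"
      unfolding exp_le_cancel_iff by (intro mult_left_mono) (use grid[OF that] n_pos in auto)
    finally show ?thesis .
  qed
  have zero_le: "Z N 0 \<le> exp (n * B)"
    unfolding Z_eq_exp_free_energy[OF assms(1)] exp_le_cancel_iff n_def
    by (intro mult_left_mono) (use zero in auto)
  have "Z_pert N \<le> 2 * (\<Sum>k<K. exp (n * grid_offset c p K k) * Z N (grid_field c p K k)) + Z N 0"
    unfolding Z_zero unfolding Z_def Z_pert_def n_def
    by (rule partition_upper_bound[of "S N" "w N" "m N"])
      (use finite_S w_pos m_bounded symmetric c_pos assms(2) in \<open>auto intro: less_imp_le\<close>)
  also have "\<dots> \<le> 2 * (\<Sum>k<K. exp (n * B)) + exp (n * B)"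
  proof -
    have "(\<Sum>k<K. exp (n * grid_offset c p K k) * Z N (grid_field c p K k)) \<le> (\<Sum>k<K. exp (n * B))"
      by (rule sum_mono) (simp add: term_le)
    then show ?thesis using zero_le by linarith
  qed
  also have "\<dots> = (2 * real K + 1) * exp (n * B)"
    by (simp add: algebra_simps)
  also have "\<dots> = exp (ln (2 * real K + 1) + n * B)"
    by (simp add: exp_add)
  finally have "ln (Z_pert N) \<le> ln (exp (ln (2 * real K + 1) + n * B))"
    using Z_pert_pos by (rule ln_mono)
  then have "ln (Z_pert N) \<le> ln (2 * real K + 1) + n * B"
    by simp
  then have "ln (Z_pert N) / n \<le> (ln (2 * real K + 1) + n * B) / n"
    by (intro divide_right_mono) (use n_pos in auto)
  also have "\<dots> = B + ln (2 * real K + 1) / n"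
    using n_pos by (simp add: add_divide_distrib)
  finally show ?thesis
    unfolding pert_free_energy_def n_def .
qed

lemma grid_offset_add_F_le:
  assumes "k < K" and \<mu>_max: "\<And>t. t \<in> {0..1} \<Longrightarrow> G t \<le> G \<mu>"
  shows "grid_offset c p K k + F (grid_field c p K k) \<le> G \<mu> + c * real p / real K"
proof -
  define u u' where "u = real k / real K" and "u' = (real k + 1) / real K"
  have K_pos: "real K > 0" using assms(1) by simp
  have u: "0 \<le> u" "u \<le> u'" "u' \<le> 1"
    unfolding u_def u'_def using assms(1) K_pos by (auto simp: divide_right_mono divide_le_eq)
  have "u ^ (p - 1) * u = u ^ p" using p_ge_2 by (cases p) (simp_all add: power_Suc2)
  then have "grid_offset c p K k + F (grid_field c p K k) = G u + c * (u' ^ p - u ^ p)"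
    unfolding grid_offset_def grid_field_def mag_functional_def u_def [symmetric] u'_def [symmetric]
    by (simp add: algebra_simps)
  also have "\<dots> \<le> G \<mu> + c * (real p * (u' - u))"
    using \<mu>_max[of u] u c_pos power_diff_le_on_unit_interval[OF u, of p]
    by (intro add_mono mult_left_mono) auto
  also have "u' - u = 1 / real K"
    unfolding u_def u'_def using K_pos by (simp add: field_simps)
  finally show ?thesis by simp
qed

lemma eventually_pert_free_energy_gt:
  assumes "q \<in> \<rat>" "0 < q" "q \<le> 1" "\<epsilon> > 0"
  shows "eventually (\<lambda>N. G q - \<epsilon> < pert_free_energy N) sequentially"
proof -
  define y where "y = c * real p * q ^ (p - 1)"
  have "F 0 < F y"
    unfolding y_def using F_gt_F0 c_pos assms(2) p_ge_2 by simp
  define e where "e = min \<epsilon> (F y - F 0) / 3"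
  have e: "0 < e" "3 * e \<le> \<epsilon>" "3 * e \<le> F y - F 0"
    using \<open>F 0 < F y\<close> assms(4) unfolding e_def by auto
  have "eventually (\<lambda>N. F y - e < free_energy N y) sequentially"
    using order_tendstoD(1)[OF free_energy_tendsto[OF assms(1)]] e unfolding y_def by simp
  moreover have "eventually (\<lambda>N. free_energy N 0 < F 0 + e) sequentially"
    using order_tendstoD(2)[OF free_energy_zero_tendsto] e by simp
  moreover have "eventually (\<lambda>N. ln 2 / real N < e) sequentially"
    using order_tendstoD(2)[OF lim_const_over_n[where a = "ln (2::real)"]] e by simp
  moreover have "eventually (\<lambda>N. 0 < N) sequentially"
    by (rule eventually_gt_at_top)
  ultimately show ?thesis
  proof eventually_elim
    case (elim N)
    have "free_energy N 0 + ln 2 / real N < free_energy N y"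
      using elim e by linarith
    then have "ln 2 + real N * free_energy N 0 < real N * free_energy N y"
      using elim by (simp add: field_simps)
    then have "exp (ln 2 + real N * free_energy N 0) \<le> exp (real N * free_energy N y)"
      by simp
    \<comment> \<open>the part of \<open>Z N y\<close> with negative magnetisation is at most \<open>Z N 0\<close>, i.e. at most half\<close>
    then have "2 * Z N 0 \<le> Z N y"
      using elim by (simp add: Z_eq_exp_free_energy exp_add)
    then have "free_energy N y - c * (real p - 1) * q ^ p - ln 2 / real N \<le> pert_free_energy N"
      using pert_free_energy_ge[of N q] elim assms unfolding y_def by simp
    then show ?case
      using elim e unfolding mag_functional_def y_def by linarith
  qed
qed

lemma eventually_pert_free_energy_lt:
  assumes "K \<ge> 1" "\<epsilon> > 0" and \<mu>_max: "\<And>t. t \<in> {0..1} \<Longrightarrow> G t \<le> G \<mu>"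
  shows "eventually (\<lambda>N. pert_free_energy N < G \<mu> + c * real p / real K + \<epsilon>) sequentially"
proof -
  define B where "B = G \<mu> + c * real p / real K + \<epsilon> / 2"
  have "eventually (\<lambda>N. \<forall>k\<in>{..<K}.
      free_energy N (grid_field c p K k) < F (grid_field c p K k) + \<epsilon> / 2) sequentially"
  proof (rule eventually_ball_finite)
    show "\<forall>k\<in>{..<K}. eventually (\<lambda>N.
        free_energy N (grid_field c p K k) < F (grid_field c p K k) + \<epsilon> / 2) sequentially"
    proof
      fix k
      have "real k / real K \<in> \<rat>" by (intro Rats_divide Rats_of_nat)
      from free_energy_tendsto[OF this] show "eventually (\<lambda>N.
          free_energy N (grid_field c p K k) < F (grid_field c p K k) + \<epsilon> / 2) sequentially"
        unfolding grid_field_def using assms(2) by (intro order_tendstoD(2)) auto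
    qed
  qed simp
  moreover have "eventually (\<lambda>N. free_energy N 0 < F 0 + \<epsilon> / 2) sequentially"
    using order_tendstoD(2)[OF free_energy_zero_tendsto] assms(2) by simp
  moreover have "eventually (\<lambda>N. ln (2 * real K + 1) / real N < \<epsilon> / 2) sequentially"
    by (rule order_tendstoD(2)[OF lim_const_over_n[where a = "ln (2 * real K + 1)"]])
      (use assms(2) in simp)
  moreover have "eventually (\<lambda>N. 0 < N) sequentially"
    by (rule eventually_gt_at_top)
  ultimately show ?thesis
  proof eventually_elim
    case (elim N)
    have "grid_offset c p K k + free_energy N (grid_field c p K k) \<le> B" if "k < K" for k
    proof -
      have "grid_offset c p K k + F (grid_field c p K k) \<le> G \<mu> + c * real p / real K"
        using that \<mu>_max by (rule grid_offset_add_F_le)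
      moreover have "free_energy N (grid_field c p K k) < F (grid_field c p K k) + \<epsilon> / 2"
        using elim that by blast
      ultimately show ?thesis
        unfolding B_def by linarith
    qed
    moreover have "free_energy N 0 \<le> B"
    proof -
      have "F 0 \<le> G \<mu>" using \<mu>_max[of 0] G_zero by simp
      moreover have "0 \<le> c * real p / real K" using c_pos by simp
      ultimately show ?thesis using elim unfolding B_def by linarith
    qed
    ultimately have "pert_free_energy N \<le> B + ln (2 * real K + 1) / real N"
      using pert_free_energy_le elim assms(1) by blast
    then show ?case
      using elim unfolding B_def by linarith
  qed
qed

theorem pert_free_energy_tendsto:
  assumes "\<mu> \<in> {0..1}" and \<mu>_max: "\<And>t. t \<in> {0..1} \<Longrightarrow> G t \<le> G \<mu>"
  shows "pert_free_energy \<longlonglongrightarrow> G \<mu>"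
proof (rule order_tendstoI)
  fix a assume "a < G \<mu>"
  then obtain \<delta> where "\<delta> > 0" and \<delta>: "\<And>t. dist t \<mu> < \<delta> \<Longrightarrow> dist (G t) (G \<mu>) < G \<mu> - a"
    using isCont_mag_functional[OF F_continuous, where c = c and p = p and t = \<mu>]
    unfolding continuous_at_eps_delta by (meson diff_gt_0_iff_gt)
  have "max 0 (\<mu> - \<delta>) < min 1 (\<mu> + \<delta>)"
    using \<open>\<delta> > 0\<close> assms(1) by auto
  then obtain q where q: "q \<in> \<rat>" "max 0 (\<mu> - \<delta>) < q" "q < min 1 (\<mu> + \<delta>)"
    using Rats_dense_in_real by blast
  then have "dist (G q) (G \<mu>) < G \<mu> - a"
    by (intro \<delta>) (auto simp: dist_real_def)
  then have "a < G q"
    by (auto simp: dist_real_def)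
  then show "eventually (\<lambda>N. a < pert_free_energy N) sequentially"
    using eventually_pert_free_energy_gt[of q "G q - a"] q by simp
next
  fix a assume "G \<mu> < a"
  define e where "e = (a - G \<mu>) / 2"
  have "0 < e" and a_eq: "a = G \<mu> + 2 * e"
    using \<open>G \<mu> < a\<close> unfolding e_def by (simp_all add: field_simps)
  obtain K :: nat where K: "c * real p / e < real K"
    using reals_Archimedean2 by blast
  moreover have "0 \<le> c * real p / e"
    using c_pos \<open>0 < e\<close> by simp
  ultimately have "K \<ge> 1" by linarith
  have K_small: "c * real p / real K < e"
    using K \<open>K \<ge> 1\<close> \<open>0 < e\<close> by (simp add: field_simps)
  have "eventually (\<lambda>N. pert_free_energy N < G \<mu> + c * real p / real K + e) sequentially"
    by (rule eventually_pert_free_energy_lt[OF \<open>K \<ge> 1\<close> \<open>0 < e\<close> \<mu>_max])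
  then show "eventually (\<lambda>N. pert_free_energy N < a) sequentially"
    by (rule eventually_mono) (use K_small a_eq in linarith)
qed

end

section \<open>Spin configurations\<close>

lemma finite_cfg: "finite (cfg N)"
  unfolding cfg_def by (intro finite_PiE) auto

lemma cfg_nonempty: "cfg N \<noteq> {}"
  unfolding cfg_def by (simp add: PiE_eq_empty_iff)

lemma abs_mag_le_1:
  assumes "\<sigma> \<in> cfg N" "\<And>i. h i \<in> {-1, 1}"
  shows "\<bar>mag N h \<sigma>\<bar> \<le> 1"
proof -
  have "\<bar>h i * \<sigma> i\<bar> = 1" if "i < N" for i
  proof -
    have "\<sigma> i \<in> {-1, 1}" using assms(1) that unfolding cfg_def by auto
    then show ?thesis using assms(2)[of i] by (auto simp: abs_mult)
  qed
  then have "\<bar>\<Sum>i<N. h i * \<sigma> i\<bar> \<le> real N"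
    using sum_abs[of "\<lambda>i. h i * \<sigma> i" "{..<N}"] by simp
  then show ?thesis
    unfolding mag_def by (cases "N = 0") (auto simp: abs_divide divide_le_eq)
qed

definition flip :: "nat \<Rightarrow> (nat \<Rightarrow> real) \<Rightarrow> nat \<Rightarrow> real" where
  "flip N \<sigma> = (\<lambda>i. if i < N then - \<sigma> i else \<sigma> i)"

lemma flip_in_cfg: "\<sigma> \<in> cfg N \<Longrightarrow> flip N \<sigma> \<in> cfg N"
  unfolding cfg_def flip_def by (auto simp: PiE_iff extensional_def)

lemma flip_flip [simp]: "flip N (flip N \<sigma>) = \<sigma>"
  unfolding flip_def by auto

lemma mag_flip: "mag N h (flip N \<sigma>) = - mag N h \<sigma>"
  unfolding mag_def flip_def by (simp add: sum_negf)

lemma Ham_flip: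
  assumes "even p"
  shows "Ham p N g (flip N \<sigma>) = Ham p N g \<sigma>"
proof -
  have "(\<Prod>j<p. flip N \<sigma> (l ! j)) = (\<Prod>j<p. \<sigma> (l ! j))" if "l \<in> idx p N" for l
  proof -
    have "l ! j < N" if "j < p" for j
      using \<open>l \<in> idx p N\<close> that unfolding idx_def by (auto dest: nth_mem)
    then have "(\<Prod>j<p. flip N \<sigma> (l ! j)) = (\<Prod>j<p. - \<sigma> (l ! j))"
      unfolding flip_def by (intro prod.cong) auto
    also have "\<dots> = (\<Prod>j<p. \<sigma> (l ! j))"
      using assms by (simp add: prod_uminus)
    finally show ?thesis .
  qed
  then show ?thesis
    unfolding Ham_def by (simp cong: sum.cong)
qed

lemma sign_symmetric_cfg:
  assumes "even p"
  shows "sign_symmetric (cfg N) (\<lambda>\<sigma>. \<phi> (Ham p N g \<sigma>)) (mag N h)"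
  unfolding sign_symmetric_def
  by (intro exI[of _ "flip N"]) (simp add: flip_in_cfg mag_flip Ham_flip[OF assms])

lemma AE_tendsto_mag_perturbed_free_energy:
  fixes M :: "'w measure" and g :: "nat list \<Rightarrow> 'w \<Rightarrow> real" and h :: "nat \<Rightarrow> 'w \<Rightarrow> real"
    and F :: "real \<Rightarrow> real" and \<beta> a :: real
  assumes "p \<ge> 2" "a > 0"
    and sign_vals: "\<And>i \<omega>. \<omega> \<in> space M \<Longrightarrow> h i \<omega> \<in> {-1, 1}"
    and F_lim: "\<And>y. AE \<omega> in M. (\<lambda>N. FN p N (\<lambda>l. g l \<omega>) (\<lambda>i. h i \<omega>) \<beta> y) \<longlonglongrightarrow> F y"
    and F_diff: "\<And>y. F differentiable (at y)"
    and F_deriv_pos: "\<And>y. y > 0 \<Longrightarrow> deriv F y > 0"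
  shows "\<exists>m0\<in>{0..1}.
    (\<forall>m\<in>{0..1}. F (a * real p * m ^ (p - 1) / 2) - a * (real p - 1) * m ^ p / 2
       \<le> F (a * real p * m0 ^ (p - 1) / 2) - a * (real p - 1) * m0 ^ p / 2) \<and>
    (AE \<omega> in M. (\<lambda>N. ln (\<Sum>\<sigma>\<in>cfg N. 2 powr (- real N) *
        exp (\<beta> / sqrt 2 * Ham p N (\<lambda>l. g l \<omega>) \<sigma> + a / 2 * real N * mag N (\<lambda>i. h i \<omega>) \<sigma> ^ p)) / real N)
      \<longlonglongrightarrow> F (a * real p * m0 ^ (p - 1) / 2) - a * (real p - 1) * m0 ^ p / 2)"
proof -
  have G_eq: "mag_functional F (a / 2) p t = F (a * real p * t ^ (p - 1) / 2) - a * (real p - 1) * t ^ p / 2"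
    for t unfolding mag_functional_def by simp
  have F_cont: "isCont F y" for y
    using F_diff by (rule differentiable_imp_continuous_within)
  have F_gt: "F 0 < F y" if "0 < y" for y
    using that F_diff F_deriv_pos by (rule deriv_pos_imp_increasing_open)
  obtain \<mu> where \<mu>: "\<mu> \<in> {0..1}" "\<And>t. t \<in> {0..1} \<Longrightarrow> mag_functional F (a / 2) p t \<le> mag_functional F (a / 2) p \<mu>"
    using mag_functional_attains_max[OF F_cont] by blast
  have "AE \<omega> in M. \<forall>q\<in>\<rat>.
      (\<lambda>N. FN p N (\<lambda>l. g l \<omega>) (\<lambda>i. h i \<omega>) \<beta> (a / 2 * real p * q ^ (p - 1))) \<longlonglongrightarrow> F (a / 2 * real p * q ^ (p - 1))"
    by (subst AE_ball_countable[OF countable_rat]) (use F_lim in blast)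
  then have "AE \<omega> in M. (\<lambda>N. ln (\<Sum>\<sigma>\<in>cfg N. 2 powr (- real N) *
        exp (\<beta> / sqrt 2 * Ham p N (\<lambda>l. g l \<omega>) \<sigma> + a / 2 * real N * mag N (\<lambda>i. h i \<omega>) \<sigma> ^ p)) / real N)
      \<longlonglongrightarrow> mag_functional F (a / 2) p \<mu>"
    using AE_space
  proof eventually_elim
    case (elim \<omega>)
    define w where "w N \<sigma> = 2 powr (- real N) * exp (\<beta> / sqrt 2 * Ham p N (\<lambda>l. g l \<omega>) \<sigma>)" for N \<sigma>
    interpret mag_perturbation cfg w "\<lambda>N. mag N (\<lambda>i. h i \<omega>)" F "a / 2" p
    proof
      show "even p \<Longrightarrow> sign_symmetric (cfg N) (w N) (mag N (\<lambda>i. h i \<omega>))" for N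
        using sign_symmetric_cfg[where \<phi> = "\<lambda>t. 2 powr (- real N) * exp (\<beta> / sqrt 2 * t)"]
        unfolding w_def by simp
      show "(\<lambda>N. ln (\<Sum>\<sigma>\<in>cfg N. w N \<sigma> * exp (a / 2 * real p * q ^ (p - 1) * real N * mag N (\<lambda>i. h i \<omega>) \<sigma>))
          / real N) \<longlonglongrightarrow> F (a / 2 * real p * q ^ (p - 1))" if "q \<in> \<rat>" for q
        using elim that unfolding FN_def w_def by (simp add: exp_add mult.assoc)
      show "\<bar>mag N (\<lambda>i. h i \<omega>) \<sigma>\<bar> \<le> 1" if "\<sigma> \<in> cfg N" for N \<sigma>
        using that sign_vals elim by (intro abs_mag_le_1) auto
    qed (use assms(1,2) finite_cfg cfg_nonempty F_cont F_gt in \<open>auto simp: w_def\<close>)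
    have pert_free_energy_eq: "pert_free_energy = (\<lambda>N. ln (\<Sum>\<sigma>\<in>cfg N. 2 powr (- real N) *
        exp (\<beta> / sqrt 2 * Ham p N (\<lambda>l. g l \<omega>) \<sigma> + a / 2 * real N * mag N (\<lambda>i. h i \<omega>) \<sigma> ^ p)) / real N)"
      by (rule ext) (simp add: pert_free_energy_def Z_pert_def w_def exp_add mult.assoc)
    have "pert_free_energy \<longlonglongrightarrow> mag_functional F (a / 2) p \<mu>"
      using \<mu> by (rule pert_free_energy_tendsto)
    then show ?case
      unfolding pert_free_energy_eq .
  qed
  then have "AE \<omega> in M. (\<lambda>N. ln (\<Sum>\<sigma>\<in>cfg N. 2 powr (- real N) *
        exp (\<beta> / sqrt 2 * Ham p N (\<lambda>l. g l \<omega>) \<sigma> + a / 2 * real N * mag N (\<lambda>i. h i \<omega>) \<sigma> ^ p)) / real N)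
      \<longlonglongrightarrow> F (a * real p * \<mu> ^ (p - 1) / 2) - a * (real p - 1) * \<mu> ^ p / 2"
    unfolding G_eq .
  moreover have "\<forall>m\<in>{0..1}. F (a * real p * m ^ (p - 1) / 2) - a * (real p - 1) * m ^ p / 2
      \<le> F (a * real p * \<mu> ^ (p - 1) / 2) - a * (real p - 1) * \<mu> ^ p / 2"
    using \<mu>(2) unfolding G_eq by blast
  ultimately show ?thesis
    using \<mu>(1) by (intro bexI[of _ \<mu>] conjI)
qed

theorem mainTheorem18:
  fixes M :: "'w measure" and p :: nat
    and g :: "nat list \<Rightarrow> 'w \<Rightarrow> real" and h :: "nat \<Rightarrow> 'w \<Rightarrow> real"
    and F :: "real \<Rightarrow> real \<Rightarrow> real" and \<beta> x :: real
  assumes "prob_space M"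
    and "p \<ge> 2"
    and indep: "prob_space.indep_vars M (\<lambda>_. borel)
          (\<lambda>k. case k of Inl l \<Rightarrow> g l | Inr i \<Rightarrow> h i)
          (Inl ` {l. length l = p} \<union> range Inr)"
    and gauss: "\<And>l. length l = p \<Longrightarrow> distributed M lborel (g l) std_normal_density"
    and sign_vals: "\<And>i \<omega>. \<omega> \<in> space M \<Longrightarrow> h i \<omega> \<in> {-1, 1}"
    and sign_unif: "\<And>i. measure M {\<omega> \<in> space M. h i \<omega> = 1} = 1 / 2"
    and F_lim: "\<And>b y. AE \<omega> in M.
          (\<lambda>N. FN p N (\<lambda>l. g l \<omega>) (\<lambda>i. h i \<omega>) b y) \<longlonglongrightarrow> F b y"
    and F_diff: "\<And>b y. F b differentiable (at y)"
    and F_deriv_pos: "\<And>b y. y > 0 \<Longrightarrow> deriv (F b) y > 0"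
    and "\<beta> > 0" and "x > 0"
  shows "(\<exists>m0\<in>{0..1}.
            (\<forall>m\<in>{0..1}. F \<beta> (\<beta>\<^sup>2 * real p * m ^ (p - 1) / 2) - \<beta>\<^sup>2 * (real p - 1) * m ^ p / 2
                 \<le> F \<beta> (\<beta>\<^sup>2 * real p * m0 ^ (p - 1) / 2) - \<beta>\<^sup>2 * (real p - 1) * m0 ^ p / 2) \<and>
            (AE \<omega> in M. (\<lambda>N. AFN p N (\<lambda>l. g l \<omega>) (\<lambda>i. h i \<omega>) \<beta>) \<longlonglongrightarrow>
                 F \<beta> (\<beta>\<^sup>2 * real p * m0 ^ (p - 1) / 2) - \<beta>\<^sup>2 * (real p - 1) * m0 ^ p / 2))
       \<and> (\<exists>m0\<in>{0..1}.
            (\<forall>m\<in>{0..1}. F \<beta> (\<beta> * x * real p * m ^ (p - 1) / 2) - \<beta> * x * (real p - 1) * m ^ p / 2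
                 \<le> F \<beta> (\<beta> * x * real p * m0 ^ (p - 1) / 2) - \<beta> * x * (real p - 1) * m0 ^ p / 2) \<and>
            (AE \<omega> in M. (\<lambda>N. LN p N (\<lambda>l. g l \<omega>) (\<lambda>i. h i \<omega>) \<beta> x) \<longlonglongrightarrow>
                 F \<beta> (\<beta> * x * real p * m0 ^ (p - 1) / 2) - \<beta> * x * (real p - 1) * m0 ^ p / 2))"
proof -
  \<comment> \<open>the Gaussian disorder and the law of the signs enter only through \<open>F_lim\<close>\<close>
  have "\<beta>\<^sup>2 > 0" "\<beta> * x > 0"
    using \<open>\<beta> > 0\<close> \<open>x > 0\<close> by simp_all
  note limit = AE_tendsto_mag_perturbed_free_energy[where F = "F \<beta>" and \<beta> = \<beta>,
      OF \<open>p \<ge> 2\<close> _ sign_vals F_lim F_diff F_deriv_pos]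
  show ?thesis
    unfolding AFN_def LN_def using limit[OF \<open>\<beta>\<^sup>2 > 0\<close>] limit[OF \<open>\<beta> * x > 0\<close>] by (rule conjI)
qed

end
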